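(* Let $\mathbf{F}=(F_1,\ldots,F_d)$ be a vector of finite simple graphs, all with exactly $n$ vertices, and let $n'' \geq n' \geq n$ be integers. Then for every positive integer $k$, \[E_{P^L_{\mathbf{F};n''}}\left({ n' \choose n} k \right) \le E_{P^L_{\mathbf{F};n'}}\left({ n'' \choose n } k \right).\]
   Context: For graphs $F,G$, $t^L(F,G)$ is the number of subgraphs of $G$ (not necessarily induced) isomorphic to $F$; write $t^L(\mathbf{F},G)=(t^L(F_1,G),\ldots,t^L(F_d,G))$. The lattice polytope of subgraph statistics is $P^L_{\mathbf{F};N}=\mathrm{conv}\{t^L(\mathbf{F},G)\mid G\text{ a graph on } N \text{ vertices}\}\subseteq\mathbb{R}^d$. For a lattice polytope $P\subseteq\mathbb{R}^d$ and a positive integer $k$, $E_P(k)$ is the number of points of $\mathbb{Z}^d$ in $kP=\{kp\mid p\in P\}$ (the Ehrhart polynomial of $P$). *)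

theory Defs
  imports "HOL-Analysis.Analysis"
begin

definition simple_graph_on :: "nat \<Rightarrow> nat set set \<Rightarrow> bool" where
  "simple_graph_on N E \<longleftrightarrow> (\<forall>e\<in>E. e \<subseteq> {0..<N} \<and> card e = 2)"

text \<open>Number of (not necessarily induced) subgraphs (V', E') of the graph G on N
  vertices that are isomorphic to the graph F on n vertices.\<close>

definition tL :: "nat \<Rightarrow> nat set set \<Rightarrow> nat \<Rightarrow> nat set set \<Rightarrow> nat" where
  "tL n F N G = card {(V', E'). V' \<subseteq> {0..<N} \<and> E' \<subseteq> G \<and>
      (\<exists>f. bij_betw f {0..<n} V' \<and> E' = (\<lambda>e. f ` e) ` F)}"

definition tL_vec :: "nat \<Rightarrow> ('d::finite \<Rightarrow> nat set set) \<Rightarrow> nat \<Rightarrow> nat set set \<Rightarrow> real^'d" where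
  "tL_vec n Fs N G = (\<chi> i. real (tL n (Fs i) N G))"

definition PL :: "nat \<Rightarrow> ('d::finite \<Rightarrow> nat set set) \<Rightarrow> nat \<Rightarrow> (real^'d) set" where
  "PL n Fs N = convex hull {tL_vec n Fs N G | G. simple_graph_on N G}"

definition ehrhart :: "(real^'d::finite) set \<Rightarrow> nat \<Rightarrow> nat" where
  "ehrhart P k = card {z. (\<forall>i. z $ i \<in> \<int>) \<and> z \<in> (\<lambda>p. real k *\<^sub>R p) ` P}"

end

theory Submission
  imports Defs
begin

text \<open>Fix a graph G on n'' vertices and average the statistics of its induced subgraphs on
  all n'-element vertex sets S. A copy of F with vertex set V is counted for exactly the
  binom(n'' - n, n' - n) sets S containing V, so by
  binom(n'', n') binom(n', n) = binom(n'', n) binom(n'' - n, n' - n) the average is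
  binom(n', n) / binom(n'', n) times the statistics of G. As a convex combination of
  vertices of P_{n'} it lies in P_{n'}, hence binom(n', n) P_{n''} \<subseteq> binom(n'', n) P_{n'}; scaling
  by k and comparing lattice points gives the inequality.\<close>

definition subgraph_copies :: "nat \<Rightarrow> nat set set \<Rightarrow> nat \<Rightarrow> nat set set \<Rightarrow> (nat set \<times> nat set set) set" where
  "subgraph_copies n F N G = {(V, E). V \<subseteq> {0..<N} \<and> E \<subseteq> G \<and>
      (\<exists>f. bij_betw f {0..<n} V \<and> E = (\<lambda>e. f ` e) ` F)}"

lemma tL_eq_card_subgraph_copies: "tL n F N G = card (subgraph_copies n F N G)"
  unfolding tL_def subgraph_copies_def by simp

lemma subgraph_copy_vertices:
  assumes "p \<in> subgraph_copies n F N G"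
  shows "fst p \<subseteq> {0..<N}" and "card (fst p) = n"
  using assms unfolding subgraph_copies_def by (auto dest: bij_betw_same_card)

lemma subgraph_copy_edge_subset:
  assumes "simple_graph_on n F" and "(V, E) \<in> subgraph_copies n F N G" and "e \<in> E"
  shows "e \<subseteq> V"
proof -
  from assms(2) obtain f where f: "bij_betw f {0..<n} V" and E: "E = (\<lambda>e. f ` e) ` F"
    unfolding subgraph_copies_def by auto
  then obtain e0 where "e0 \<in> F" and "e = f ` e0" using assms(3) by auto
  with assms(1) f show "e \<subseteq> V" unfolding simple_graph_on_def bij_betw_def by auto
qed

lemma finite_subgraph_copies:
  assumes "simple_graph_on n F"
  shows "finite (subgraph_copies n F N G)"
proof (rule finite_subset)
  show "subgraph_copies n F N G \<subseteq> Pow {0..<N} \<times> Pow (Pow {0..<N})"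
    using subgraph_copy_vertices(1) subgraph_copy_edge_subset[OF assms] by fastforce
qed auto

definition map_copy :: "('a \<Rightarrow> 'b) \<Rightarrow> 'a set \<times> 'a set set \<Rightarrow> 'b set \<times> 'b set set" where
  "map_copy h = (\<lambda>(V, E). (h ` V, (\<lambda>e. h ` e) ` E))"

lemma map_copy_in_subgraph_copies:
  assumes "(V, E) \<in> subgraph_copies n F N G" and "inj_on h V"
    and "h ` V \<subseteq> {0..<M}" and "\<And>e. e \<in> E \<Longrightarrow> h ` e \<in> G'"
  shows "map_copy h (V, E) \<in> subgraph_copies n F M G'"
proof -
  from assms(1) obtain f where f: "bij_betw f {0..<n} V" and E: "E = (\<lambda>e. f ` e) ` F"
    unfolding subgraph_copies_def by auto
  have "bij_betw (h \<circ> f) {0..<n} (h ` V)"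
    using f inj_on_imp_bij_betw[OF assms(2)] by (rule bij_betw_trans)
  moreover have "(\<lambda>e. h ` e) ` E = (\<lambda>e. (h \<circ> f) ` e) ` F"
    unfolding E image_image by (simp add: comp_def)
  moreover have "(\<lambda>e. h ` e) ` E \<subseteq> G'"
    using assms(4) by auto
  ultimately show ?thesis
    using assms(3) unfolding subgraph_copies_def map_copy_def by auto
qed

lemma map_copy_left_inverse:
  assumes "\<And>x. x \<in> V \<Longrightarrow> g (h x) = x" and "\<And>e. e \<in> E \<Longrightarrow> e \<subseteq> V"
  shows "map_copy g (map_copy h (V, E)) = (V, E)"
proof -
  have "(\<lambda>x. g (h x)) ` e = e" if "e \<subseteq> V" for e
    using that assms(1) by (force simp: image_iff)
  then show ?thesis
    using assms unfolding map_copy_def by (simp add: image_image)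
qed

definition enum_set :: "nat set \<Rightarrow> nat \<Rightarrow> nat" where
  "enum_set S = (SOME h. bij_betw h {0..<card S} S)"

lemma bij_betw_enum_set: "finite S \<Longrightarrow> bij_betw (enum_set S) {0..<card S} S"
  unfolding enum_set_def using ex_bij_betw_nat_finite by (rule someI_ex)

definition induced_subgraph :: "nat set \<Rightarrow> nat set set \<Rightarrow> nat set set" where
  "induced_subgraph S G = {e. e \<subseteq> {0..<card S} \<and> enum_set S ` e \<in> G}"

lemma simple_graph_on_induced_subgraph:
  assumes "simple_graph_on N G" and "finite S"
  shows "simple_graph_on (card S) (induced_subgraph S G)"
  unfolding simple_graph_on_def induced_subgraph_def
proof safe
  fix e assume e: "e \<subseteq> {0..<card S}" "enum_set S ` e \<in> G"
  have "inj_on (enum_set S) e"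
    using bij_betw_enum_set[OF assms(2)] e(1) unfolding bij_betw_def by (rule inj_on_subset[OF conjunct1])
  then have "card e = card (enum_set S ` e)" by (simp add: card_image)
  with assms(1) e(2) show "card e = 2" unfolding simple_graph_on_def by auto
qed

lemma tL_induced_subgraph:
  assumes F: "simple_graph_on n F" and S: "S \<subseteq> {0..<N}"
  shows "tL n F (card S) (induced_subgraph S G) = card {p \<in> subgraph_copies n F N G. fst p \<subseteq> S}"
proof -
  define m where "m = card S"
  define h where "h = enum_set S"
  define g where "g = inv_into {0..<m} h"
  have h: "bij_betw h {0..<m} S"
    unfolding h_def m_def using S by (intro bij_betw_enum_set) (auto intro: finite_subset)
  then have g: "bij_betw g S {0..<m}"
    unfolding g_def by (rule bij_betw_inv_into)
  have gh: "g (h x) = x" if "x \<in> {0..<m}" for x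
    using h that unfolding g_def bij_betw_def by simp
  have hg: "h (g y) = y" if "y \<in> S" for y
    using h that unfolding g_def bij_betw_def by (auto intro: f_inv_into_f)
  have H: "induced_subgraph S G = {e. e \<subseteq> {0..<m} \<and> h ` e \<in> G}"
    unfolding induced_subgraph_def h_def m_def ..
  have "bij_betw (map_copy h) (subgraph_copies n F m (induced_subgraph S G))
                              {p \<in> subgraph_copies n F N G. fst p \<subseteq> S}"
  proof (rule bij_betw_byWitness[where f' = "map_copy g"])
    show "\<forall>p\<in>subgraph_copies n F m (induced_subgraph S G). map_copy g (map_copy h p) = p"
      using subgraph_copy_vertices(1) subgraph_copy_edge_subset[OF F]
      by (force intro!: map_copy_left_inverse gh)
    show "\<forall>p\<in>{p \<in> subgraph_copies n F N G. fst p \<subseteq> S}. map_copy h (map_copy g p) = p"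
      using subgraph_copy_edge_subset[OF F]
      by (force intro!: map_copy_left_inverse hg)
    show "map_copy h ` subgraph_copies n F m (induced_subgraph S G)
            \<subseteq> {p \<in> subgraph_copies n F N G. fst p \<subseteq> S}"
    proof (rule image_subsetI)
      fix p assume "p \<in> subgraph_copies n F m (induced_subgraph S G)"
      moreover obtain V E where p: "p = (V, E)" by fastforce
      ultimately have c: "(V, E) \<in> subgraph_copies n F m (induced_subgraph S G)" by simp
      then have "V \<subseteq> {0..<m}" and "E \<subseteq> induced_subgraph S G"
        unfolding subgraph_copies_def by auto
      then have "inj_on h V" "h ` V \<subseteq> S" "\<And>e. e \<in> E \<Longrightarrow> h ` e \<in> G"
        using h unfolding bij_betw_def H by (blast intro: inj_on_subset)+
      then show "map_copy h p \<in> {p \<in> subgraph_copies n F N G. fst p \<subseteq> S}"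
        using map_copy_in_subgraph_copies[OF c] S p by (auto simp: map_copy_def)
    qed
    show "map_copy g ` {p \<in> subgraph_copies n F N G. fst p \<subseteq> S}
            \<subseteq> subgraph_copies n F m (induced_subgraph S G)"
    proof (rule image_subsetI)
      fix p assume "p \<in> {p \<in> subgraph_copies n F N G. fst p \<subseteq> S}"
      moreover obtain V E where p: "p = (V, E)" by fastforce
      ultimately have c: "(V, E) \<in> subgraph_copies n F N G" and V: "V \<subseteq> S" by auto
      then have "inj_on g V" "g ` V \<subseteq> {0..<m}"
        using g unfolding bij_betw_def by (auto intro: inj_on_subset)
      moreover have "g ` e \<in> induced_subgraph S G" if "e \<in> E" for e
      proof -
        have "e \<subseteq> S" "e \<in> G"
          using subgraph_copy_edge_subset[OF F c that] V c that unfolding subgraph_copies_def by auto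
        moreover have "h ` g ` e = e"
          using \<open>e \<subseteq> S\<close> hg by (force simp: image_iff)
        ultimately show ?thesis
          using g unfolding H bij_betw_def by auto
      qed
      ultimately show "map_copy g p \<in> subgraph_copies n F m (induced_subgraph S G)"
        unfolding p by (rule map_copy_in_subgraph_copies[OF c])
    qed
  qed
  then show ?thesis
    unfolding tL_eq_card_subgraph_copies m_def by (rule bij_betw_same_card)
qed

lemma card_supersets:
  assumes A: "finite A" and V: "V \<subseteq> A" and "card V \<le> m"
  shows "card {S. S \<subseteq> A \<and> card S = m \<and> V \<subseteq> S} = (card A - card V) choose (m - card V)"
proof -
  have fin: "finite V" "finite (A - V)" using A V by (auto intro: finite_subset)
  have "bij_betw (\<lambda>S. S - V) {S. S \<subseteq> A \<and> card S = m \<and> V \<subseteq> S} {T. T \<subseteq> A - V \<and> card T = m - card V}"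
  proof (rule bij_betw_byWitness[where f' = "\<lambda>T. T \<union> V"])
    show "(\<lambda>S. S - V) ` {S. S \<subseteq> A \<and> card S = m \<and> V \<subseteq> S} \<subseteq> {T. T \<subseteq> A - V \<and> card T = m - card V}"
      using fin by (auto simp: card_Diff_subset)
    show "(\<lambda>T. T \<union> V) ` {T. T \<subseteq> A - V \<and> card T = m - card V} \<subseteq> {S. S \<subseteq> A \<and> card S = m \<and> V \<subseteq> S}"
    proof (rule image_subsetI)
      fix T assume T: "T \<in> {T. T \<subseteq> A - V \<and> card T = m - card V}"
      then have "card (T \<union> V) = card T + card V"
        using fin by (intro card_Un_disjoint) (auto intro: finite_subset)
      with T V \<open>card V \<le> m\<close> show "T \<union> V \<in> {S. S \<subseteq> A \<and> card S = m \<and> V \<subseteq> S}" by auto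
    qed
  qed auto
  then have "card {S. S \<subseteq> A \<and> card S = m \<and> V \<subseteq> S} = card {T. T \<subseteq> A - V \<and> card T = m - card V}"
    by (rule bij_betw_same_card)
  also have "\<dots> = card (A - V) choose (m - card V)"
    using fin(2) by (rule n_subsets)
  finally show ?thesis
    using fin(1) V by (simp add: card_Diff_subset)
qed

lemma sum_card_contained_in_subsets:
  fixes \<pi> :: "'b \<Rightarrow> 'a set"
  assumes A: "finite A" and C: "finite C" and \<pi>: "\<And>p. p \<in> C \<Longrightarrow> \<pi> p \<subseteq> A \<and> card (\<pi> p) = n"
    and "n \<le> m"
  shows "(\<Sum>S | S \<subseteq> A \<and> card S = m. card {p \<in> C. \<pi> p \<subseteq> S}) = card C * ((card A - n) choose (m - n))"
proof -
  let ?Ss = "{S. S \<subseteq> A \<and> card S = m}"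
  have "finite ?Ss" using A by simp
  then have "(\<Sum>S\<in>?Ss. card {p \<in> C. \<pi> p \<subseteq> S}) = (\<Sum>S\<in>?Ss. \<Sum>p\<in>C. if \<pi> p \<subseteq> S then 1 else 0)"
    using C by (simp add: sum.If_cases Int_def)
  also have "\<dots> = (\<Sum>p\<in>C. \<Sum>S\<in>?Ss. if \<pi> p \<subseteq> S then 1 else 0)"
    by (rule sum.swap)
  also have "\<dots> = (\<Sum>p\<in>C. card {S. S \<subseteq> A \<and> card S = m \<and> \<pi> p \<subseteq> S})"
    using \<open>finite ?Ss\<close> by (simp add: sum.If_cases Int_def conj_ac)
  also have "\<dots> = (\<Sum>p\<in>C. (card A - n) choose (m - n))"
  proof (rule sum.cong)
    fix p assume "p \<in> C"
    with \<pi> \<open>n \<le> m\<close> show "card {S. S \<subseteq> A \<and> card S = m \<and> \<pi> p \<subseteq> S} = (card A - n) choose (m - n)"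
      using card_supersets[OF A, of "\<pi> p" m] by simp
  qed simp
  finally show ?thesis by simp
qed

lemma sum_tL_induced_subgraph:
  assumes F: "simple_graph_on n F" and "n \<le> m"
  shows "(\<Sum>S | S \<subseteq> {0..<N} \<and> card S = m. tL n F m (induced_subgraph S G))
           = tL n F N G * ((N - n) choose (m - n))"
proof -
  have "(\<Sum>S | S \<subseteq> {0..<N} \<and> card S = m. tL n F m (induced_subgraph S G))
          = (\<Sum>S | S \<subseteq> {0..<N} \<and> card S = m. card {p \<in> subgraph_copies n F N G. fst p \<subseteq> S})"
    by (rule sum.cong) (auto simp flip: tL_induced_subgraph[OF F])
  also have "\<dots> = tL n F N G * ((N - n) choose (m - n))"
    unfolding tL_eq_card_subgraph_copies
    using sum_card_contained_in_subsets[OF _ finite_subgraph_copies[OF F] _ \<open>n \<le> m\<close>, where A = "{0..<N}" and \<pi> = fst]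
    by (simp add: subgraph_copy_vertices)
  finally show ?thesis .
qed

lemma compact_PL: "compact (PL n Fs N)"
proof -
  have "{G. simple_graph_on N G} \<subseteq> Pow (Pow {0..<N})"
    unfolding simple_graph_on_def by auto
  then have "finite (tL_vec n Fs N ` {G. simple_graph_on N G})"
    by (auto intro: finite_subset)
  then show ?thesis
    unfolding PL_def by (simp add: setcompr_eq_image compact_convex_hull finite_imp_compact)
qed

lemma scaled_tL_vec_in_PL:
  fixes Fs :: "'d::finite \<Rightarrow> nat set set"
  assumes Fs: "\<And>i. simple_graph_on n (Fs i)" and "n \<le> n'" and "n' \<le> n''"
    and G: "simple_graph_on n'' G"
  shows "(real (n' choose n) / real (n'' choose n)) *\<^sub>R tL_vec n Fs n'' G \<in> PL n Fs n'"
proof -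
  define Ss where "Ss = {S. S \<subseteq> {0..<n''} \<and> card S = n'}"
  have card_Ss: "card Ss = n'' choose n'"
    unfolding Ss_def using n_subsets[of "{0..<n''}" n'] by simp
  have "(n'' choose n') * (n' choose n) = (n'' choose n) * ((n'' - n) choose (n' - n))"
    using \<open>n \<le> n'\<close> \<open>n' \<le> n''\<close> by (rule choose_mult)
  then have ratio: "real ((n'' - n) choose (n' - n)) / real (card Ss)
                      = real (n' choose n) / real (n'' choose n)"
    using \<open>n \<le> n'\<close> \<open>n' \<le> n''\<close> unfolding card_Ss
    by (simp add: field_simps flip: of_nat_mult)
  have average: "(real (n' choose n) / real (n'' choose n)) *\<^sub>R tL_vec n Fs n'' G
      = (\<Sum>S\<in>Ss. (1 / real (card Ss)) *\<^sub>R tL_vec n Fs n' (induced_subgraph S G))"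
  unfolding vec_eq_iff
  proof
    fix i
    have "(\<Sum>S\<in>Ss. real (tL n (Fs i) n' (induced_subgraph S G)))
            = real (tL n (Fs i) n'' G) * real ((n'' - n) choose (n' - n))"
      unfolding Ss_def using sum_tL_induced_subgraph[OF Fs \<open>n \<le> n'\<close>]
      by (simp flip: of_nat_sum of_nat_mult)
    then show "((real (n' choose n) / real (n'' choose n)) *\<^sub>R tL_vec n Fs n'' G) $ i
        = (\<Sum>S\<in>Ss. (1 / real (card Ss)) *\<^sub>R tL_vec n Fs n' (induced_subgraph S G)) $ i"
      by (simp add: tL_vec_def mult.commute flip: ratio sum_divide_distrib)
  qed
  have "(\<Sum>S\<in>Ss. (1 / real (card Ss)) *\<^sub>R tL_vec n Fs n' (induced_subgraph S G)) \<in> PL n Fs n'"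
  proof (rule convex_sum)
    show "finite Ss" "convex (PL n Fs n')"
      unfolding Ss_def PL_def by simp_all
    show "(\<Sum>S\<in>Ss. 1 / real (card Ss)) = 1"
      using \<open>n' \<le> n''\<close> card_Ss by simp
    show "tL_vec n Fs n' (induced_subgraph S G) \<in> PL n Fs n'" if "S \<in> Ss" for S
    proof -
      have "simple_graph_on n' (induced_subgraph S G)"
        using simple_graph_on_induced_subgraph[OF G, of S] that
        unfolding Ss_def by (auto intro: finite_subset)
      then show ?thesis unfolding PL_def by (blast intro: hull_inc)
    qed
  qed simp
  with average show ?thesis by simp
qed

lemma PL_scaled_subset:
  fixes Fs :: "'d::finite \<Rightarrow> nat set set"
  assumes Fs: "\<And>i. simple_graph_on n (Fs i)" and "n \<le> n'" and "n' \<le> n''"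
  shows "(\<lambda>p. real (n' choose n) *\<^sub>R p) ` PL n Fs n'' \<subseteq> (\<lambda>p. real (n'' choose n) *\<^sub>R p) ` PL n Fs n'"
proof -
  let ?A = "real (n' choose n)" and ?B = "real (n'' choose n)"
  have "(\<lambda>p. ?A *\<^sub>R p) ` PL n Fs n''
          = convex hull ((\<lambda>p. ?A *\<^sub>R p) ` {tL_vec n Fs n'' G | G. simple_graph_on n'' G})"
    unfolding PL_def by (rule convex_hull_scaling[symmetric])
  also have "\<dots> \<subseteq> (\<lambda>p. ?B *\<^sub>R p) ` PL n Fs n'"
  proof (rule hull_minimal)
    show "convex ((\<lambda>p. ?B *\<^sub>R p) ` PL n Fs n')"
      unfolding PL_def by (intro convex_scaling convex_convex_hull)
    have "?A *\<^sub>R tL_vec n Fs n'' G \<in> (\<lambda>p. ?B *\<^sub>R p) ` PL n Fs n'"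
      if "simple_graph_on n'' G" for G
    proof (rule image_eqI)
      show "?A *\<^sub>R tL_vec n Fs n'' G = ?B *\<^sub>R ((?A / ?B) *\<^sub>R tL_vec n Fs n'' G)"
        using \<open>n \<le> n'\<close> \<open>n' \<le> n''\<close> by simp
      show "(?A / ?B) *\<^sub>R tL_vec n Fs n'' G \<in> PL n Fs n'"
        using scaled_tL_vec_in_PL[OF Fs \<open>n \<le> n'\<close> \<open>n' \<le> n''\<close> that] .
    qed
    then show "(\<lambda>p. ?A *\<^sub>R p) ` {tL_vec n Fs n'' G | G. simple_graph_on n'' G}
                 \<subseteq> (\<lambda>p. ?B *\<^sub>R p) ` PL n Fs n'"
      by blast
  qed
  finally show ?thesis .
qed

lemma finite_integer_points:
  fixes X :: "(real^'d::finite) set"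
  assumes "bounded X"
  shows "finite {z. (\<forall>i. z $ i \<in> \<int>) \<and> z \<in> X}"
proof -
  obtain M where M: "\<And>x. x \<in> X \<Longrightarrow> norm x \<le> M"
    using assms bounded_iff by blast
  define K where "K = {x::real. x \<in> \<int> \<and> \<bar>x\<bar> \<le> M}"
  have "{z. (\<forall>i. z $ i \<in> \<int>) \<and> z \<in> X} \<subseteq> (\<lambda>f. \<chi> i. f i) ` (UNIV \<rightarrow>\<^sub>E K)"
  proof
    fix z assume z: "z \<in> {z. (\<forall>i. z $ i \<in> \<int>) \<and> z \<in> X}"
    then have "(\<lambda>i. z $ i) \<in> UNIV \<rightarrow>\<^sub>E K"
      using M component_le_norm_cart[of z] unfolding K_def by (force intro: order_trans)
    then show "z \<in> (\<lambda>f. \<chi> i. f i) ` (UNIV \<rightarrow>\<^sub>E K)"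
      by (rule rev_image_eqI) simp
  qed
  moreover have "finite K"
    unfolding K_def using finite_abs_int_segment[of M] by simp
  then have "finite ((\<lambda>f. \<chi> i. f i) ` (UNIV \<rightarrow>\<^sub>E K))"
    by (intro finite_imageI finite_PiE) simp_all
  ultimately show ?thesis
    by (rule finite_subset)
qed

lemma ehrhart_mono:
  assumes "(\<lambda>p. real a *\<^sub>R p) ` P \<subseteq> (\<lambda>p. real b *\<^sub>R p) ` Q" and "bounded Q"
  shows "ehrhart P a \<le> ehrhart Q b"
  unfolding ehrhart_def
proof (rule card_mono)
  show "finite {z. (\<forall>i. z $ i \<in> \<int>) \<and> z \<in> (\<lambda>p. real b *\<^sub>R p) ` Q}"
    using assms(2) by (intro finite_integer_points bounded_scaling)
qed (use assms(1) in blast)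

theorem proposition2p8:
  fixes Fs :: "'d::finite \<Rightarrow> nat set set" and n n' n'' k :: nat
  assumes "\<And>i. simple_graph_on n (Fs i)"
    and "n \<le> n'" and "n' \<le> n''" and "0 < k"
  shows "ehrhart (PL n Fs n'') ((n' choose n) * k) \<le> ehrhart (PL n Fs n') ((n'' choose n) * k)"
proof (rule ehrhart_mono)
  have "(\<lambda>p. real k *\<^sub>R p) ` (\<lambda>p. real (n' choose n) *\<^sub>R p) ` PL n Fs n''
          \<subseteq> (\<lambda>p. real k *\<^sub>R p) ` (\<lambda>p. real (n'' choose n) *\<^sub>R p) ` PL n Fs n'"
    using PL_scaled_subset[OF assms(1-3)] by (rule image_mono)
  then show "(\<lambda>p. real ((n' choose n) * k) *\<^sub>R p) ` PL n Fs n''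
               \<subseteq> (\<lambda>p. real ((n'' choose n) * k) *\<^sub>R p) ` PL n Fs n'"
    by (simp add: image_image mult.commute)
  show "bounded (PL n Fs n')"
    using compact_PL by (rule compact_imp_bounded)
qed

end
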